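(* Let $(\xi,\eta)\in\mathbb{R}^2$ be such that $1,\xi,\eta$ are linearly independent over $\mathbb{Q}$, $f(\xi,\eta)=0$ for some irreducible $f\in\mathbb{Q}[x,y]$ of degree $2$ with $f\notin\mathbb{Q}[x]$, and there is $\lambda>1/2$ such that for every sufficiently large $X\ge1$ the system $|x_0|\le X$, $|x_0\xi-x_1|\le X^{-\lambda}$, $|x_0\eta-x_2|\le X^{-\lambda}$ has a non-zero solution in $\mathbb{Z}^3$. Let $(\mathbf{x}_i)_{i\ge1}$ be a sequence of minimal points for $(\xi,\eta)$, $W_i=\langle\mathbf{x}_i,\mathbf{x}_{i+1}\rangle_{\mathbb{Q}}$, and $H(W_i)=\|\mathbf{x}_i\wedge\mathbf{x}_{i+1}\|_2$. Let $I$ be the set of indices $i\ge2$ such that $\mathbf{x}_{i-1},\mathbf{x}_i,\mathbf{x}_{i+1}$ are linearly independent over $\mathbb{Q}$. Then $I$ is infinite, and for any pair of consecutive elements $i<j$ of $I$ we have $W_i\neq W_j$ and $X_j\le H(W_i)H(W_j)$.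
   Context: For $\mathbf{x}=(x_0,x_1,x_2)\in\mathbb{Z}^3$ put $\delta(\mathbf{x})=\max\{|x_0\xi-x_1|,|x_0\eta-x_2|\}$. For $X\ge1$, $\Delta(X)$ is the minimum of $\delta(\mathbf{x})$ over all $\mathbf{x}\in\mathbb{Z}^3$ with $1\le x_0\le X$. Let $X_1=1<X_2<X_3<\cdots$ be the number $1$ together with the points of discontinuity of $\Delta$, in increasing order, and $\Delta_i=\Delta(X_i)$. A sequence of minimal points is a choice, for each $i\ge1$, of $\mathbf{x}_i=(x_{i,0},x_{i,1},x_{i,2})\in\mathbb{Z}^3$ with $x_{i,0}=X_i$ and $\delta(\mathbf{x}_i)=\Delta_i$. $\wedge$ denotes the cross product in $\mathbb{R}^3$ and $\|\cdot\|_2$ the Euclidean norm; consecutive elements of $I$ are taken in the natural order of $\mathbb{N}$. *)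

theory Defs
  imports "HOL-Analysis.Analysis" "HOL-Analysis.Cross3"
    "HOL-Computational_Algebra.Polynomial" "HOL-Computational_Algebra.Factorial_Ring"
begin

type_synonym ipt = "int \<times> int \<times> int"

(* Bivariate polynomials Q[x,y] are represented as rat poly poly = (Q[x])[y]:
   the outer variable is y, the coefficients are polynomials in x. *)

definition eval2 :: "rat poly poly \<Rightarrow> real \<Rightarrow> real \<Rightarrow> real" where
  "eval2 f x y = poly (map_poly (\<lambda>p. poly (map_poly of_rat p) x) f) y"

(* total degree of a bivariate polynomial (coefficient of x^k y^i is coeff (coeff f i) k) *)
definition total_degree :: "rat poly poly \<Rightarrow> nat" where
  "total_degree f = Max {i + degree (coeff f i) | i. coeff f i \<noteq> 0}"

definition delta :: "real \<Rightarrow> real \<Rightarrow> ipt \<Rightarrow> real" where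
  "delta \<xi> \<eta> x = (case x of (x0, x1, x2) \<Rightarrow>
      max \<bar>real_of_int x0 * \<xi> - real_of_int x1\<bar> \<bar>real_of_int x0 * \<eta> - real_of_int x2\<bar>)"

definition Delta :: "real \<Rightarrow> real \<Rightarrow> real \<Rightarrow> real" where
  "Delta \<xi> \<eta> X = Inf {delta \<xi> \<eta> x | x. 1 \<le> fst x \<and> real_of_int (fst x) \<le> X}"

definition disc_points :: "real \<Rightarrow> real \<Rightarrow> real set" where
  "disc_points \<xi> \<eta> = insert 1 {t. t > 1 \<and> \<not> isCont (Delta \<xi> \<eta>) t}"

(* X_i : the i-th element (i >= 1) of disc_points in increasing order *)
definition Xseq :: "real \<Rightarrow> real \<Rightarrow> nat \<Rightarrow> real" where
  "Xseq \<xi> \<eta> i = (THE t. t \<in> disc_points \<xi> \<eta> \<and>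
      finite {s \<in> disc_points \<xi> \<eta>. s < t} \<and> card {s \<in> disc_points \<xi> \<eta>. s < t} = i - 1)"

definition minimal_points :: "real \<Rightarrow> real \<Rightarrow> (nat \<Rightarrow> ipt) \<Rightarrow> bool" where
  "minimal_points \<xi> \<eta> x \<longleftrightarrow> (\<forall>i\<ge>1. real_of_int (fst (x i)) = Xseq \<xi> \<eta> i \<and>
      delta \<xi> \<eta> (x i) = Delta \<xi> \<eta> (Xseq \<xi> \<eta> i))"

definition to_rat3 :: "ipt \<Rightarrow> rat \<times> rat \<times> rat" where
  "to_rat3 x = (case x of (a, b, c) \<Rightarrow> (of_int a, of_int b, of_int c))"

definition to_real3 :: "ipt \<Rightarrow> real^3" where
  "to_real3 x = (case x of (a, b, c) \<Rightarrow> vector [of_int a, of_int b, of_int c])"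

definition smul3 :: "rat \<Rightarrow> rat \<times> rat \<times> rat \<Rightarrow> rat \<times> rat \<times> rat" where
  "smul3 r v = (case v of (a, b, c) \<Rightarrow> (r * a, r * b, r * c))"

definition add3 :: "rat \<times> rat \<times> rat \<Rightarrow> rat \<times> rat \<times> rat \<Rightarrow> rat \<times> rat \<times> rat" where
  "add3 u v = (case u of (a, b, c) \<Rightarrow> case v of (a', b', c') \<Rightarrow> (a + a', b + b', c + c'))"

definition qspan2 :: "ipt \<Rightarrow> ipt \<Rightarrow> (rat \<times> rat \<times> rat) set" where
  "qspan2 u v = {add3 (smul3 a (to_rat3 u)) (smul3 b (to_rat3 v)) | a b. True}"

definition qlin_indep3 :: "ipt \<Rightarrow> ipt \<Rightarrow> ipt \<Rightarrow> bool" where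
  "qlin_indep3 u v w \<longleftrightarrow> (\<forall>a b c :: rat.
      add3 (add3 (smul3 a (to_rat3 u)) (smul3 b (to_rat3 v))) (smul3 c (to_rat3 w)) = (0, 0, 0)
      \<longrightarrow> a = 0 \<and> b = 0 \<and> c = 0)"

definition Hgt :: "ipt \<Rightarrow> ipt \<Rightarrow> real" where
  "Hgt u v = norm (cross3 (to_real3 u) (to_real3 v))"

end

theory Submission
  imports Defs
begin

(* Write N_k = x_k \<times> x_(k+1). If x_k and x_(k+1) were proportional, then X_k \<Delta>_(k+1) = X_(k+1) \<Delta>_k,
   contradicting X_k < X_(k+1) and \<Delta>_(k+1) \<le> \<Delta>_k; so N_k is a nonzero integer normal of W_k.
   For k \<notin> I the points x_(k-1), x_k, x_(k+1) are dependent, which makes N_(k-1) and N_k parallel.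
   Hence for consecutive i < j in I, N_i is parallel to N_(j-1): it is orthogonal to x_j but not to
   x_(j+1), so W_i \<noteq> W_j, and N_i \<times> N_j = (N_i \<bullet> x_(j+1)) x_j with N_i \<bullet> x_(j+1) a nonzero integer,
   whence X_j \<le> |x_j| \<le> |N_i| |N_j|. If I were finite, all x_k with k large would lie in one
   rational plane n \<bullet> y = 0, and X_k |n \<bullet> (1, \<xi>, \<eta>)| would stay bounded by a multiple of \<Delta>_1;
   as 1, \<xi>, \<eta> are linearly independent over Q and X_k \<rightarrow> \<infinity>, this is impossible.
   The approximation hypothesis is only used to make \<Delta> tend to 0, so that there are infinitely many
   minimal points. *)

section \<open>The minimal distance function\<close>

lemma delta_nonneg: "0 \<le> delta \<xi> \<eta> x"
  by (cases x) (auto simp: delta_def)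

lemma delta_uminus: "delta \<xi> \<eta> (-a, -b, -c) = delta \<xi> \<eta> (a, b, c)"
  by (simp add: delta_def abs_minus_commute)

lemma abs_le_delta:
  "\<bar>real_of_int a * \<xi> - real_of_int b\<bar> \<le> delta \<xi> \<eta> (a, b, c)"
  "\<bar>real_of_int a * \<eta> - real_of_int c\<bar> \<le> delta \<xi> \<eta> (a, b, c)"
  by (simp_all add: delta_def)

lemma delta_pos:
  assumes "\<xi> \<notin> \<rat>" and "fst x \<noteq> 0"
  shows "0 < delta \<xi> \<eta> x"
proof (cases x)
  case (fields a b c)
  have "real_of_int a * \<xi> \<noteq> real_of_int b"
  proof
    assume "real_of_int a * \<xi> = real_of_int b"
    then have "\<xi> = of_int b / of_int a"
      using \<open>fst x \<noteq> 0\<close> fields by (simp add: field_simps)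
    with \<open>\<xi> \<notin> \<rat>\<close> show False by simp
  qed
  then show ?thesis using fields by (auto simp: delta_def less_max_iff_disj)
qed

lemma delta_proportional:
  fixes a0 b0 :: int
  assumes "0 < a0" "0 < b0"
    and "a0 * b1 = a1 * b0" "a0 * b2 = a2 * b0"
  shows "real_of_int a0 * delta \<xi> \<eta> (b0, b1, b2) = real_of_int b0 * delta \<xi> \<eta> (a0, a1, a2)"
proof -
  have "real_of_int a0 * (real_of_int b0 * \<xi> - real_of_int b1)
          = real_of_int b0 * (real_of_int a0 * \<xi> - real_of_int a1)"
       "real_of_int a0 * (real_of_int b0 * \<eta> - real_of_int b2)
          = real_of_int b0 * (real_of_int a0 * \<eta> - real_of_int a2)"
    using arg_cong[OF assms(3), of real_of_int] arg_cong[OF assms(4), of real_of_int]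
    by (simp_all add: algebra_simps)
  then have "real_of_int a0 * \<bar>real_of_int b0 * \<xi> - real_of_int b1\<bar>
               = real_of_int b0 * \<bar>real_of_int a0 * \<xi> - real_of_int a1\<bar>"
            "real_of_int a0 * \<bar>real_of_int b0 * \<eta> - real_of_int b2\<bar>
               = real_of_int b0 * \<bar>real_of_int a0 * \<eta> - real_of_int a2\<bar>"
    using assms(1,2) by (metis abs_mult abs_of_pos of_int_0_less_iff)+
  then show ?thesis
    using assms(1,2) by (simp add: delta_def max_mult_distrib_left)
qed

lemma Delta_le:
  assumes "1 \<le> fst x" "real_of_int (fst x) \<le> X"
  shows "Delta \<xi> \<eta> X \<le> delta \<xi> \<eta> x"
  unfolding Delta_def
proof (rule cInf_lower)
  show "delta \<xi> \<eta> x \<in> {delta \<xi> \<eta> x | x. 1 \<le> fst x \<and> real_of_int (fst x) \<le> X}"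
    using assms by blast
  show "bdd_below {delta \<xi> \<eta> x | x. 1 \<le> fst x \<and> real_of_int (fst x) \<le> X}"
    by (rule bdd_belowI[of _ 0]) (auto simp: delta_nonneg)
qed

lemma finite_delta_sublevel:
  "finite {x. 1 \<le> fst x \<and> real_of_int (fst x) \<le> X \<and> delta \<xi> \<eta> x \<le> c}"
proof -
  define B where "B = \<lceil>X * (\<bar>\<xi>\<bar> + \<bar>\<eta>\<bar>) + c\<rceil>"
  have "{x. 1 \<le> fst x \<and> real_of_int (fst x) \<le> X \<and> delta \<xi> \<eta> x \<le> c}
          \<subseteq> {1..\<lceil>X\<rceil>} \<times> {-B..B} \<times> {-B..B}"
  proof
    fix x assume "x \<in> {x. 1 \<le> fst x \<and> real_of_int (fst x) \<le> X \<and> delta \<xi> \<eta> x \<le> c}"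
    then obtain a b d where x: "x = (a, b, d)" and a: "1 \<le> a" "real_of_int a \<le> X"
      and "delta \<xi> \<eta> (a, b, d) \<le> c"
      by (cases x) auto
    then have "\<bar>real_of_int a * \<xi> - real_of_int b\<bar> \<le> c" "\<bar>real_of_int a * \<eta> - real_of_int d\<bar> \<le> c"
      by (simp_all add: delta_def)
    moreover have "\<bar>real_of_int a * \<xi>\<bar> \<le> X * \<bar>\<xi>\<bar>" "\<bar>real_of_int a * \<eta>\<bar> \<le> X * \<bar>\<eta>\<bar>"
      using a by (simp_all add: abs_mult mult_right_mono)
    moreover have "0 \<le> X * \<bar>\<xi>\<bar>" "0 \<le> X * \<bar>\<eta>\<bar>"
      using a by simp_all
    ultimately have "\<bar>b\<bar> \<le> B" "\<bar>d\<bar> \<le> B"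
      unfolding B_def distrib_left by linarith+
    moreover have "a \<le> \<lceil>X\<rceil>" using a by linarith
    ultimately show "x \<in> {1..\<lceil>X\<rceil>} \<times> {-B..B} \<times> {-B..B}"
      using x a by auto
  qed
  then show ?thesis by (rule finite_subset) simp
qed

lemma Delta_attained:
  assumes "1 \<le> X"
  obtains x where "1 \<le> fst x" "real_of_int (fst x) \<le> X" "delta \<xi> \<eta> x = Delta \<xi> \<eta> X"
proof -
  let ?c = "delta \<xi> \<eta> (1, 0, 0)"
  let ?F = "{x. 1 \<le> fst x \<and> real_of_int (fst x) \<le> X \<and> delta \<xi> \<eta> x \<le> ?c}"
  have "(1, 0, 0) \<in> ?F" using assms by simp
  then have "Min (delta \<xi> \<eta> ` ?F) \<in> delta \<xi> \<eta> ` ?F"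
    using finite_delta_sublevel by (intro Min_in) blast+
  then obtain x where x: "x \<in> ?F" and x_min: "delta \<xi> \<eta> x = Min (delta \<xi> \<eta> ` ?F)"
    by auto
  have "delta \<xi> \<eta> x \<le> Delta \<xi> \<eta> X"
    unfolding Delta_def
  proof (rule cInf_greatest)
    show "{delta \<xi> \<eta> y | y. 1 \<le> fst y \<and> real_of_int (fst y) \<le> X} \<noteq> {}"
      using assms by force
  next
    fix d assume "d \<in> {delta \<xi> \<eta> y | y. 1 \<le> fst y \<and> real_of_int (fst y) \<le> X}"
    then obtain y where y: "d = delta \<xi> \<eta> y" "1 \<le> fst y" "real_of_int (fst y) \<le> X"
      by blast
    show "delta \<xi> \<eta> x \<le> d"
    proof (cases "y \<in> ?F")
      case True
      then show ?thesis
        unfolding x_min y(1) using finite_delta_sublevel by (intro Min_le) auto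
    next
      case False
      then show ?thesis using x y by auto
    qed
  qed
  moreover have "Delta \<xi> \<eta> X \<le> delta \<xi> \<eta> x"
    using x by (intro Delta_le) auto
  ultimately show ?thesis
    using x by (intro that[of x]) auto
qed

lemma Delta_antimono:
  assumes "1 \<le> X" "X \<le> Y"
  shows "Delta \<xi> \<eta> Y \<le> Delta \<xi> \<eta> X"
proof -
  obtain x where x: "1 \<le> fst x" "real_of_int (fst x) \<le> X" "delta \<xi> \<eta> x = Delta \<xi> \<eta> X"
    using Delta_attained[OF assms(1)] .
  then have "Delta \<xi> \<eta> Y \<le> delta \<xi> \<eta> x"
    using assms(2) by (intro Delta_le) auto
  with x(3) show ?thesis by simp
qed

lemma Delta_floor: "Delta \<xi> \<eta> X = Delta \<xi> \<eta> (of_int \<lfloor>X\<rfloor>)"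
  unfolding Delta_def by (simp add: le_floor_iff)

lemma Delta_pos:
  assumes "\<xi> \<notin> \<rat>" "1 \<le> X"
  shows "0 < Delta \<xi> \<eta> X"
proof -
  obtain x where "1 \<le> fst x" "delta \<xi> \<eta> x = Delta \<xi> \<eta> X"
    using Delta_attained[OF assms(2)] by metis
  with delta_pos[OF assms(1), of x \<eta>] show ?thesis by simp
qed

lemma Delta_arbitrarily_small:
  assumes "0 < lam"
    and sol: "\<forall>\<^sub>F X in at_top. X \<ge> 1 \<longrightarrow>
        (\<exists>x0 x1 x2 :: int. (x0, x1, x2) \<noteq> (0, 0, 0) \<and> \<bar>real_of_int x0\<bar> \<le> X \<and>
           \<bar>real_of_int x0 * \<xi> - real_of_int x1\<bar> \<le> X powr (-lam) \<and>
           \<bar>real_of_int x0 * \<eta> - real_of_int x2\<bar> \<le> X powr (-lam))"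
      (is "eventually ?sol at_top")
    and "0 < e"
  shows "\<exists>X\<ge>1. Delta \<xi> \<eta> X < e"
proof -
  have "((\<lambda>X. X powr (-lam)) \<longlongrightarrow> 0) at_top"
    using \<open>0 < lam\<close> by (intro tendsto_neg_powr) (auto simp: filterlim_ident)
  then have "\<forall>\<^sub>F X in at_top. X powr (-lam) < min e 1"
    using \<open>0 < e\<close> by (intro order_tendstoD(2)) auto
  with sol have "\<forall>\<^sub>F X in at_top. ?sol X \<and> X powr (-lam) < min e 1 \<and> 1 \<le> X"
    by (intro eventually_conj eventually_ge_at_top)
  then have "\<exists>X. ?sol X \<and> X powr (-lam) < min e 1 \<and> 1 \<le> X"
    by (rule eventually_happens'[rotated]) (simp add: trivial_limit_def[symmetric])
  then obtain X x0 x1 x2 where X: "1 \<le> X" "X powr (-lam) < min e 1"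
    and nz: "(x0, x1, x2) \<noteq> (0, 0, 0)" and x0: "\<bar>real_of_int x0\<bar> \<le> X"
    and approx: "\<bar>real_of_int x0 * \<xi> - real_of_int x1\<bar> \<le> X powr (-lam)"
                "\<bar>real_of_int x0 * \<eta> - real_of_int x2\<bar> \<le> X powr (-lam)"
    by blast
  have small: "\<bar>real_of_int x0 * \<xi> - real_of_int x1\<bar> < min e 1"
              "\<bar>real_of_int x0 * \<eta> - real_of_int x2\<bar> < min e 1"
    using approx X(2) by linarith+
  have "x0 \<noteq> 0"
  proof
    assume "x0 = 0"
    with small have "\<bar>real_of_int x1\<bar> < 1" "\<bar>real_of_int x2\<bar> < 1" by simp_all
    then have "x1 = 0" "x2 = 0" by linarith+
    with nz \<open>x0 = 0\<close> show False by simp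
  qed
  define y where "y = (if 0 < x0 then (x0, x1, x2) else (-x0, -x1, -x2))"
  have "1 \<le> fst y" "real_of_int (fst y) \<le> X"
    using \<open>x0 \<noteq> 0\<close> x0 by (auto simp: y_def)
  then have "Delta \<xi> \<eta> X \<le> delta \<xi> \<eta> y" by (rule Delta_le)
  also have "\<dots> = delta \<xi> \<eta> (x0, x1, x2)" by (simp add: y_def delta_uminus)
  also have "\<dots> < e" using small by (simp add: delta_def)
  finally show ?thesis using X by blast
qed

section \<open>Discontinuities of the minimal distance function\<close>

lemma disc_points_ge_1: "t \<in> disc_points \<xi> \<eta> \<Longrightarrow> 1 \<le> t"
  unfolding disc_points_def by auto

lemma disc_points_integral:
  assumes "t \<in> disc_points \<xi> \<eta>"
  shows "t = of_int \<lfloor>t\<rfloor>"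
proof (rule ccontr)
  assume "t \<noteq> of_int \<lfloor>t\<rfloor>"
  then have "t \<in> {of_int \<lfloor>t\<rfloor><..<of_int \<lfloor>t\<rfloor> + 1}"
    using floor_correct[of t] by (auto simp: less_le)
  then have "\<forall>\<^sub>F s in nhds t. s \<in> {of_int \<lfloor>t\<rfloor><..<of_int \<lfloor>t\<rfloor> + 1}"
    by (intro eventually_nhds_in_open) auto
  then have "\<forall>\<^sub>F s in nhds t. Delta \<xi> \<eta> s = Delta \<xi> \<eta> t"
  proof eventually_elim
    case (elim s)
    then have "\<lfloor>s\<rfloor> = \<lfloor>t\<rfloor>" by (intro floor_unique) auto
    then show ?case by (metis Delta_floor)
  qed
  then have "\<forall>\<^sub>F s in at t. Delta \<xi> \<eta> s = Delta \<xi> \<eta> t"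
    unfolding eventually_at_filter by (rule eventually_mono) simp
  then have "isCont (Delta \<xi> \<eta>) t"
    unfolding isCont_def by (rule tendsto_eventually)
  moreover have "\<not> isCont (Delta \<xi> \<eta>) t"
    using assms \<open>t \<noteq> of_int \<lfloor>t\<rfloor>\<close> unfolding disc_points_def by auto
  ultimately show False by contradiction
qed

lemma jump_in_disc_points:
  assumes "2 \<le> n" and jump: "Delta \<xi> \<eta> (real n) < Delta \<xi> \<eta> (real n - 1)"
  shows "real n \<in> disc_points \<xi> \<eta>"
proof -
  have "\<forall>\<^sub>F s in at_left (real n). s \<in> {real n - 1<..<real n}"
    by (rule eventually_at_left_real) simp
  then have "\<forall>\<^sub>F s in at_left (real n). Delta \<xi> \<eta> s = Delta \<xi> \<eta> (real n - 1)"
  proof eventually_elim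
    case (elim s)
    then have "\<lfloor>s\<rfloor> = int n - 1" by (intro floor_unique) auto
    then show ?case by (metis Delta_floor of_int_diff of_int_of_nat_eq of_int_1)
  qed
  then have "(Delta \<xi> \<eta> \<longlongrightarrow> Delta \<xi> \<eta> (real n - 1)) (at_left (real n))"
    by (rule tendsto_eventually)
  moreover have "\<not> (Delta \<xi> \<eta> \<longlongrightarrow> Delta \<xi> \<eta> (real n)) (at_left (real n))"
    using tendsto_unique[OF trivial_limit_at_left_real calculation] jump by force
  ultimately have "\<not> isCont (Delta \<xi> \<eta>) (real n)"
    using continuous_at_split unfolding continuous_within by blast
  then show ?thesis
    using assms(1) unfolding disc_points_def by auto
qed

lemma infinite_disc_points:
  assumes pos: "\<And>X. 1 \<le> X \<Longrightarrow> 0 < Delta \<xi> \<eta> X"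
    and small: "\<And>e. 0 < e \<Longrightarrow> \<exists>X\<ge>1. Delta \<xi> \<eta> X < e"
  shows "infinite (disc_points \<xi> \<eta>)"
proof
  assume fin: "finite (disc_points \<xi> \<eta>)"
  define M where "M = nat \<lceil>Max (disc_points \<xi> \<eta>)\<rceil>"
  have le_M: "t \<le> real M" if "t \<in> disc_points \<xi> \<eta>" for t
    using Max_ge[OF fin that] real_nat_ceiling_ge unfolding M_def by (rule order_trans)
  have "1 \<in> disc_points \<xi> \<eta>" unfolding disc_points_def by simp
  then have "1 \<le> M" using le_M by fastforce
  have Delta_beyond_M: "Delta \<xi> \<eta> (real n) = Delta \<xi> \<eta> (real M)" if "M \<le> n" for n
    using that
  proof (induction n rule: dec_induct)
    case base
    then show ?case ..
  next
    case (step n)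
    have "real (Suc n) \<notin> disc_points \<xi> \<eta>"
      using le_M step.hyps by fastforce
    then have "\<not> Delta \<xi> \<eta> (real (Suc n)) < Delta \<xi> \<eta> (real (Suc n) - 1)"
      using jump_in_disc_points[of "Suc n"] \<open>1 \<le> M\<close> step.hyps by force
    moreover have "Delta \<xi> \<eta> (real (Suc n)) \<le> Delta \<xi> \<eta> (real n)"
      using \<open>1 \<le> M\<close> step.hyps by (intro Delta_antimono) auto
    ultimately show ?case using step.IH by simp
  qed
  have "Delta \<xi> \<eta> (real M) \<le> Delta \<xi> \<eta> X" if "1 \<le> X" for X
  proof (cases "X \<le> real M")
    case True
    with that show ?thesis by (rule Delta_antimono)
  next
    case False
    then have "M \<le> nat \<lfloor>X\<rfloor>" "of_int \<lfloor>X\<rfloor> = real (nat \<lfloor>X\<rfloor>)"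
      using that by (linarith, simp)
    then have "Delta \<xi> \<eta> X = Delta \<xi> \<eta> (real M)"
      using Delta_beyond_M[of "nat \<lfloor>X\<rfloor>"] Delta_floor[of \<xi> \<eta> X] by metis
    then show ?thesis by simp
  qed
  then show False
    using small[OF pos[of "real M"]] \<open>1 \<le> M\<close> by force
qed

definition disc_nats :: "real \<Rightarrow> real \<Rightarrow> nat set" where
  "disc_nats \<xi> \<eta> = {n. real n \<in> disc_points \<xi> \<eta>}"

lemma disc_points_eq_image: "disc_points \<xi> \<eta> = real ` disc_nats \<xi> \<eta>"
proof
  show "disc_points \<xi> \<eta> \<subseteq> real ` disc_nats \<xi> \<eta>"
  proof
    fix t assume t: "t \<in> disc_points \<xi> \<eta>"
    then have "t = real (nat \<lfloor>t\<rfloor>)"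
      using disc_points_integral disc_points_ge_1
      by (metis of_nat_nat zero_le_floor order_trans zero_le_one)
    with t show "t \<in> real ` disc_nats \<xi> \<eta>"
      unfolding disc_nats_def by (metis image_eqI mem_Collect_eq)
  qed
qed (auto simp: disc_nats_def)

lemma infinite_disc_nats: "infinite (disc_points \<xi> \<eta>) \<Longrightarrow> infinite (disc_nats \<xi> \<eta>)"
  unfolding disc_points_eq_image by (rule contrapos_nn) auto

lemma disc_points_below_enumerate:
  assumes "infinite (disc_nats \<xi> \<eta>)"
  shows "{s \<in> disc_points \<xi> \<eta>. s < real (enumerate (disc_nats \<xi> \<eta>) m)}
           = real ` enumerate (disc_nats \<xi> \<eta>) ` {..<m}"
proof -
  have "disc_nats \<xi> \<eta> = range (enumerate (disc_nats \<xi> \<eta>))"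
    using assms enumerate_in_set enumerate_Ex by blast
  then have "{s \<in> disc_points \<xi> \<eta>. s < real (enumerate (disc_nats \<xi> \<eta>) m)}
      = real ` {n \<in> range (enumerate (disc_nats \<xi> \<eta>)). n < enumerate (disc_nats \<xi> \<eta>) m}"
    unfolding disc_points_eq_image by auto
  also have "\<dots> = real ` enumerate (disc_nats \<xi> \<eta>) ` {..<m}"
    using assms by auto
  finally show ?thesis .
qed

lemma Xseq_eq_enumerate:
  assumes inf: "infinite (disc_points \<xi> \<eta>)" and "1 \<le> k"
  shows "Xseq \<xi> \<eta> k = real (enumerate (disc_nats \<xi> \<eta>) (k - 1))"
proof -
  let ?e = "enumerate (disc_nats \<xi> \<eta>)"
  have inf': "infinite (disc_nats \<xi> \<eta>)" using inf by (rule infinite_disc_nats)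
  have "inj (\<lambda>j. real (?e j))"
    using inj_enumerate[OF inf'] by (simp add: inj_def)
  then have card: "card {s \<in> disc_points \<xi> \<eta>. s < real (?e m)} = m" for m
    unfolding disc_points_below_enumerate[OF inf'] image_image
    by (simp add: card_image inj_on_subset[of _ UNIV])
  show ?thesis unfolding Xseq_def
  proof (rule the_equality)
    show "real (?e (k - 1)) \<in> disc_points \<xi> \<eta> \<and>
        finite {s \<in> disc_points \<xi> \<eta>. s < real (?e (k - 1))} \<and>
        card {s \<in> disc_points \<xi> \<eta>. s < real (?e (k - 1))} = k - 1"
      using card enumerate_in_set[OF inf'] disc_points_below_enumerate[OF inf']
      unfolding disc_nats_def by auto
  next
    fix t assume t: "t \<in> disc_points \<xi> \<eta> \<and> finite {s \<in> disc_points \<xi> \<eta>. s < t}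
        \<and> card {s \<in> disc_points \<xi> \<eta>. s < t} = k - 1"
    then obtain j where "t = real (?e j)"
      unfolding disc_points_eq_image using enumerate_Ex[OF inf'] by blast
    with t card[of j] show "t = real (?e (k - 1))" by simp
  qed
qed

lemma
  assumes "infinite (disc_points \<xi> \<eta>)" and "1 \<le> k"
  shows Xseq_less_Xseq_Suc: "Xseq \<xi> \<eta> k < Xseq \<xi> \<eta> (k + 1)"
    and Xseq_ge_1: "1 \<le> Xseq \<xi> \<eta> k"
    and Xseq_ge_index: "real (k - 1) \<le> Xseq \<xi> \<eta> k"
proof -
  have inf: "infinite (disc_nats \<xi> \<eta>)" using assms(1) by (rule infinite_disc_nats)
  show "Xseq \<xi> \<eta> k < Xseq \<xi> \<eta> (k + 1)"
    using assms inf by (simp add: Xseq_eq_enumerate)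
  show "1 \<le> Xseq \<xi> \<eta> k"
    unfolding Xseq_eq_enumerate[OF assms]
    by (rule disc_points_ge_1) (use enumerate_in_set[OF inf] in \<open>simp add: disc_nats_def\<close>)
  show "real (k - 1) \<le> Xseq \<xi> \<eta> k"
    by (simp only: Xseq_eq_enumerate[OF assms] of_nat_le_iff le_enumerate[OF inf])
qed

section \<open>Integer vectors and cross products\<close>

unbundle cross3_syntax

definition real_of_rat3 :: "rat \<times> rat \<times> rat \<Rightarrow> real^3" where
  "real_of_rat3 p = (case p of (a, b, c) \<Rightarrow> vector [of_rat a, of_rat b, of_rat c])"

lemma real_of_rat3_add3: "real_of_rat3 (add3 p q) = real_of_rat3 p + real_of_rat3 q"
  by (cases p; cases q) (simp add: real_of_rat3_def add3_def vec_eq_iff forall_3 of_rat_add)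

lemma real_of_rat3_smul3: "real_of_rat3 (smul3 r p) = of_rat r *\<^sub>R real_of_rat3 p"
  by (cases p) (simp add: real_of_rat3_def smul3_def vec_eq_iff forall_3 of_rat_mult)

lemma real_of_rat3_to_rat3: "real_of_rat3 (to_rat3 u) = to_real3 u"
  by (cases u) (simp add: real_of_rat3_def to_rat3_def to_real3_def vec_eq_iff forall_3)

lemma real_of_rat3_eq_0_iff: "real_of_rat3 p = 0 \<longleftrightarrow> p = (0, 0, 0)"
  by (cases p) (simp add: real_of_rat3_def vec_eq_iff forall_3)

lemma qlin_indep3_iff:
  "qlin_indep3 u v w \<longleftrightarrow> (\<forall>a b c :: rat.
     of_rat a *\<^sub>R to_real3 u + of_rat b *\<^sub>R to_real3 v + of_rat c *\<^sub>R to_real3 w = 0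
       \<longrightarrow> a = 0 \<and> b = 0 \<and> c = 0)"
  unfolding qlin_indep3_def
  by (simp flip: real_of_rat3_eq_0_iff
      add: real_of_rat3_add3 real_of_rat3_smul3 real_of_rat3_to_rat3)

lemma to_rat3_in_qspan2: "to_rat3 v \<in> qspan2 u v"
proof -
  have "to_rat3 v = add3 (smul3 0 (to_rat3 u)) (smul3 1 (to_rat3 v))"
    by (cases u; cases v) (simp add: add3_def smul3_def to_rat3_def)
  then show ?thesis unfolding qspan2_def by blast
qed

lemma qspan2_orthogonal_cross:
  assumes "to_rat3 w \<in> qspan2 u v"
  shows "(to_real3 u \<times> to_real3 v) \<bullet> to_real3 w = 0"
proof -
  obtain a b where "to_rat3 w = add3 (smul3 a (to_rat3 u)) (smul3 b (to_rat3 v))"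
    using assms unfolding qspan2_def by blast
  then have "to_real3 w = of_rat a *\<^sub>R to_real3 u + of_rat b *\<^sub>R to_real3 v"
    by (metis real_of_rat3_add3 real_of_rat3_smul3 real_of_rat3_to_rat3)
  then show ?thesis by (simp add: inner_add_right dot_cross_self)
qed

definition int_vec :: "real^3 \<Rightarrow> bool" where
  "int_vec z \<longleftrightarrow> (\<forall>i. z $ i \<in> \<int>)"

lemma int_vec_to_real3: "int_vec (to_real3 u)"
  unfolding int_vec_def by (cases u) (simp add: to_real3_def forall_3 vector_3)

lemma int_vec_cross: "int_vec a \<Longrightarrow> int_vec b \<Longrightarrow> int_vec (a \<times> b)"
  unfolding int_vec_def by (simp add: forall_3 cross3_def vector_3)

lemma inner_int_vec_in_Ints: "int_vec a \<Longrightarrow> int_vec b \<Longrightarrow> a \<bullet> b \<in> \<int>"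
  unfolding int_vec_def by (simp add: inner_vec_def sum_3)

lemma cross_cross_cross: "(a \<times> b) \<times> (c \<times> d) = ((a \<times> b) \<bullet> d) *\<^sub>R c - ((a \<times> b) \<bullet> c) *\<^sub>R d"
  by (simp add: cross3_simps forall_3)

lemma norm_cross_le: "norm (a \<times> b) \<le> norm a * norm b"
proof -
  have "(norm (a \<times> b))\<^sup>2 \<le> (norm a * norm b)\<^sup>2"
    using norm_cross_dot[of a b] by (metis le_add_same_cancel1 zero_le_power2)
  then show ?thesis by (rule power2_le_imp_le) simp
qed

lemma cross_basis_expansion:
  "((u \<times> v) \<bullet> (u \<times> v)) *\<^sub>R w
     = ((w \<times> v) \<bullet> (u \<times> v)) *\<^sub>R u + ((u \<times> w) \<bullet> (u \<times> v)) *\<^sub>R v + ((u \<times> v) \<bullet> w) *\<^sub>R (u \<times> v)"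
  by (simp add: cross3_simps forall_3)

lemma cross_parallel_if_dependent:
  assumes "u \<times> v \<noteq> 0" "v \<times> w \<noteq> 0"
    and "a *\<^sub>R u + b *\<^sub>R v + c *\<^sub>R w = 0" "\<not> (a = 0 \<and> b = 0 \<and> c = 0)"
  obtains r where "r \<noteq> 0" "u \<times> v = r *\<^sub>R (v \<times> w)"
proof -
  have "(a *\<^sub>R u + b *\<^sub>R v + c *\<^sub>R w) \<times> v = 0"
    using assms(3) by simp
  then have eq: "a *\<^sub>R (u \<times> v) = c *\<^sub>R (v \<times> w)"
    by (simp add: cross_add_left cross_mult_left cross_skew[of w v])
  have "a \<noteq> 0"
  proof
    assume "a = 0"
    with eq assms(2) have "c = 0" by simp
    with \<open>a = 0\<close> assms(2,3) have "b = 0" by auto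
    with \<open>a = 0\<close> \<open>c = 0\<close> assms(4) show False by simp
  qed
  with eq assms(1) have "c \<noteq> 0" by auto
  from eq \<open>a \<noteq> 0\<close> have "u \<times> v = (c / a) *\<^sub>R (v \<times> w)"
    by (metis divide_inverse_commute inverse_eq_divide scaleR_scaleR right_inverse scaleR_one
        mult.commute)
  with \<open>a \<noteq> 0\<close> \<open>c \<noteq> 0\<close> show ?thesis by (intro that[of "c / a"]) auto
qed

(* The coefficients of w in the basis u, v, u \<times> v are integers (after clearing the
   denominator |u \<times> v|^2), so a vanishing determinant yields a rational relation. *)
lemma qlin_indep3_imp_det_nonzero:
  assumes indep: "qlin_indep3 u v w" and nz: "to_real3 u \<times> to_real3 v \<noteq> 0"
  shows "(to_real3 u \<times> to_real3 v) \<bullet> to_real3 w \<noteq> 0"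
proof
  let ?u = "to_real3 u" and ?v = "to_real3 v" and ?w = "to_real3 w"
  assume "(?u \<times> ?v) \<bullet> ?w = 0"
  then have expansion: "((?u \<times> ?v) \<bullet> (?u \<times> ?v)) *\<^sub>R ?w
      = ((?w \<times> ?v) \<bullet> (?u \<times> ?v)) *\<^sub>R ?u + ((?u \<times> ?w) \<bullet> (?u \<times> ?v)) *\<^sub>R ?v"
    using cross_basis_expansion[of ?u ?v ?w] by simp
  have "(?w \<times> ?v) \<bullet> (?u \<times> ?v) \<in> \<int>" "(?u \<times> ?w) \<bullet> (?u \<times> ?v) \<in> \<int>"
      "(?u \<times> ?v) \<bullet> (?u \<times> ?v) \<in> \<int>"
    by (intro inner_int_vec_in_Ints int_vec_cross int_vec_to_real3)+
  then obtain p q r :: int where "(?w \<times> ?v) \<bullet> (?u \<times> ?v) = of_int p"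
      "(?u \<times> ?w) \<bullet> (?u \<times> ?v) = of_int q" "(?u \<times> ?v) \<bullet> (?u \<times> ?v) = of_int r"
    by (metis Ints_cases)
  with expansion have "of_rat (of_int p) *\<^sub>R ?u + of_rat (of_int q) *\<^sub>R ?v
      + of_rat (of_int (- r)) *\<^sub>R ?w = 0"
    by (simp add: of_rat_minus)
  with indep have "r = 0" unfolding qlin_indep3_iff by fastforce
  with nz \<open>(?u \<times> ?v) \<bullet> (?u \<times> ?v) = of_int r\<close> show False by simp
qed

lemma not_Rats_if_rat_independent:
  assumes "\<forall>a b c :: rat. of_rat a + of_rat b * \<xi> + of_rat c * \<eta> = 0 \<longrightarrow> a = 0 \<and> b = 0 \<and> c = 0"
  shows "\<xi> \<notin> \<rat>"
proof
  assume "\<xi> \<in> \<rat>"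
  then obtain q where "\<xi> = of_rat q" by (rule Rats_cases)
  then have "of_rat (- q) + of_rat 1 * \<xi> + of_rat 0 * \<eta> = 0" by (simp add: of_rat_minus)
  then show False using assms[rule_format, of "- q" 1 0] by simp
qed

section \<open>Sequences of minimal points\<close>

locale minimal_point_sequence =
  fixes \<xi> \<eta> :: real and x :: "nat \<Rightarrow> ipt"
  assumes indep: "\<forall>a b c :: rat. of_rat a + of_rat b * \<xi> + of_rat c * \<eta> = 0
                     \<longrightarrow> a = 0 \<and> b = 0 \<and> c = 0"
    and infinite_disc_points: "infinite (disc_points \<xi> \<eta>)"
    and minimal: "minimal_points \<xi> \<eta> x"
begin

abbreviation independent_at :: "nat \<Rightarrow> bool" where
  "independent_at k \<equiv> qlin_indep3 (x (k - 1)) (x k) (x (k + 1))"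

definition point :: "nat \<Rightarrow> real^3" where
  "point k = to_real3 (x k)"

definition normal :: "nat \<Rightarrow> real^3" where
  "normal k = point k \<times> point (k + 1)"

lemma fst_x_eq_Xseq: "1 \<le> k \<Longrightarrow> real_of_int (fst (x k)) = Xseq \<xi> \<eta> k"
  using minimal unfolding minimal_points_def by blast

lemma delta_x_eq_Delta: "1 \<le> k \<Longrightarrow> delta \<xi> \<eta> (x k) = Delta \<xi> \<eta> (Xseq \<xi> \<eta> k)"
  using minimal unfolding minimal_points_def by blast

lemma point_nth_1: "point k $ 1 = real_of_int (fst (x k))"
  unfolding point_def by (cases "x k") (simp add: to_real3_def vector_3)

lemma int_vec_point: "int_vec (point k)"
  unfolding point_def by (rule int_vec_to_real3)

lemma int_vec_normal: "int_vec (normal k)"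
  unfolding normal_def by (intro int_vec_cross int_vec_point)

lemma normal_orthogonal_next: "normal k \<bullet> point (k + 1) = 0"
  unfolding normal_def by (simp add: dot_cross_self)

lemma normal_nonzero:
  assumes "1 \<le> k"
  shows "normal k \<noteq> 0"
proof
  assume "normal k = 0"
  obtain a0 a1 a2 where a: "x k = (a0, a1, a2)" by (cases "x k")
  obtain b0 b1 b2 where b: "x (k + 1) = (b0, b1, b2)" by (cases "x (k + 1)")
  have "normal k $ 2 = 0" "normal k $ 3 = 0"
    using \<open>normal k = 0\<close> by simp_all
  then have proportional: "a0 * b1 = a1 * b0" "a0 * b2 = a2 * b0"
    unfolding normal_def point_def a b to_real3_def cross3_def
    by (simp_all add: vector_3 flip: of_int_mult)
  have X: "real_of_int a0 = Xseq \<xi> \<eta> k" "real_of_int b0 = Xseq \<xi> \<eta> (k + 1)"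
    using fst_x_eq_Xseq[of k] fst_x_eq_Xseq[of "k + 1"] a b assms by simp_all
  have less: "Xseq \<xi> \<eta> k < Xseq \<xi> \<eta> (k + 1)" and ge_1: "1 \<le> Xseq \<xi> \<eta> k"
    using Xseq_less_Xseq_Suc Xseq_ge_1 infinite_disc_points assms by blast+
  then have "0 < a0" "0 < b0"
    using X by linarith+
  have eq: "Xseq \<xi> \<eta> k * Delta \<xi> \<eta> (Xseq \<xi> \<eta> (k + 1))
      = Xseq \<xi> \<eta> (k + 1) * Delta \<xi> \<eta> (Xseq \<xi> \<eta> k)"
    using delta_proportional[OF \<open>0 < a0\<close> \<open>0 < b0\<close> proportional, of \<xi> \<eta>]
      delta_x_eq_Delta[of k] delta_x_eq_Delta[of "k + 1"] a b X assms by simp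
  have "Xseq \<xi> \<eta> k * Delta \<xi> \<eta> (Xseq \<xi> \<eta> (k + 1)) \<le> Xseq \<xi> \<eta> k * Delta \<xi> \<eta> (Xseq \<xi> \<eta> k)"
    using less ge_1 by (intro mult_left_mono Delta_antimono) auto
  also have "\<dots> < Xseq \<xi> \<eta> (k + 1) * Delta \<xi> \<eta> (Xseq \<xi> \<eta> k)"
    using less Delta_pos[OF not_Rats_if_rat_independent[OF indep] ge_1]
    by (rule mult_strict_right_mono)
  finally show False
    using eq by simp
qed

lemma normal_parallel_if_dependent:
  assumes "2 \<le> k" and "\<not> independent_at k"
  obtains r where "r \<noteq> 0" "normal (k - 1) = r *\<^sub>R normal k"
proof -
  obtain a b c :: rat
    where comb: "of_rat a *\<^sub>R point (k - 1) + of_rat b *\<^sub>R point k + of_rat c *\<^sub>R point (k + 1) = 0"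
      and nontrivial: "\<not> (a = 0 \<and> b = 0 \<and> c = 0)"
    using assms(2) unfolding qlin_indep3_iff point_def by blast
  have "point (k - 1) \<times> point k \<noteq> 0" "point k \<times> point (k + 1) \<noteq> 0"
    using normal_nonzero[of "k - 1"] normal_nonzero[of k] assms(1) by (simp_all add: normal_def)
  then obtain r where "r \<noteq> 0" "point (k - 1) \<times> point k = r *\<^sub>R (point k \<times> point (k + 1))"
    by (rule cross_parallel_if_dependent[OF _ _ comb]) (use nontrivial in auto)
  then show ?thesis
    using assms(1) that by (simp add: normal_def)
qed

lemma normal_parallel_across_gap:
  assumes "1 \<le> i" and gap: "\<forall>k. i < k \<and> k < j \<longrightarrow> \<not> independent_at k"
    and "i \<le> m" "m < j"
  shows "\<exists>r. r \<noteq> 0 \<and> normal m = r *\<^sub>R normal i"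
  using \<open>i \<le> m\<close> \<open>m < j\<close>
proof (induction m rule: dec_induct)
  case base
  show ?case by (intro exI[of _ 1]) simp
next
  case (step n)
  then obtain r where "r \<noteq> 0" "normal n = r *\<^sub>R normal i"
    by auto
  moreover obtain s where "s \<noteq> 0" "normal (Suc n - 1) = s *\<^sub>R normal (Suc n)"
    by (rule normal_parallel_if_dependent[of "Suc n"])
      (use gap[rule_format, of "Suc n"] step.hyps step.prems \<open>1 \<le> i\<close> in auto)
  ultimately have "s *\<^sub>R normal (Suc n) = r *\<^sub>R normal i"
    by simp
  then have "normal (Suc n) = (inverse s * r) *\<^sub>R normal i"
    using \<open>s \<noteq> 0\<close> by (metis scaleR_scaleR left_inverse scaleR_one)
  moreover have "inverse s * r \<noteq> 0"
    using \<open>r \<noteq> 0\<close> \<open>s \<noteq> 0\<close> by simp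
  ultimately show ?case by blast
qed

lemma det_normal_nonzero:
  assumes "2 \<le> j" "independent_at j"
  shows "normal (j - 1) \<bullet> point (j + 1) \<noteq> 0"
  using qlin_indep3_imp_det_nonzero[OF assms(2)] normal_nonzero[of "j - 1"] assms(1)
  by (simp add: normal_def point_def)

lemma
  assumes "1 \<le> i" "i < j" "independent_at j"
    and gap: "\<forall>k. i < k \<and> k < j \<longrightarrow> \<not> independent_at k"
  shows normal_orthogonal_across_gap: "normal i \<bullet> point j = 0"
    and det_normal_across_gap_nonzero: "normal i \<bullet> point (j + 1) \<noteq> 0"
proof -
  have "i \<le> j - 1" "j - 1 < j"
    using assms(2) by auto
  then obtain r where "r \<noteq> 0" "normal (j - 1) = r *\<^sub>R normal i"
    using normal_parallel_across_gap[OF assms(1) gap] by blast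
  moreover have "normal (j - 1) \<bullet> point j = 0"
    using normal_orthogonal_next[of "j - 1"] assms(2) by simp
  moreover have "normal (j - 1) \<bullet> point (j + 1) \<noteq> 0"
    using det_normal_nonzero assms by simp
  ultimately show "normal i \<bullet> point j = 0" "normal i \<bullet> point (j + 1) \<noteq> 0"
    by auto
qed

lemma qspan2_ne_across_gap:
  assumes "1 \<le> i" "i < j" "independent_at j"
    and "\<forall>k. i < k \<and> k < j \<longrightarrow> \<not> independent_at k"
  shows "qspan2 (x i) (x (i + 1)) \<noteq> qspan2 (x j) (x (j + 1))"
proof
  assume "qspan2 (x i) (x (i + 1)) = qspan2 (x j) (x (j + 1))"
  then have "to_rat3 (x (j + 1)) \<in> qspan2 (x i) (x (i + 1))"
    using to_rat3_in_qspan2 by metis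
  then have "normal i \<bullet> point (j + 1) = 0"
    unfolding normal_def point_def by (rule qspan2_orthogonal_cross)
  with det_normal_across_gap_nonzero[OF assms] show False by contradiction
qed

lemma Xseq_le_Hgt_mult_across_gap:
  assumes "1 \<le> i" "i < j" "independent_at j"
    and "\<forall>k. i < k \<and> k < j \<longrightarrow> \<not> independent_at k"
  shows "Xseq \<xi> \<eta> j \<le> Hgt (x i) (x (i + 1)) * Hgt (x j) (x (j + 1))"
proof -
  define t where "t = normal i \<bullet> point (j + 1)"
  have "normal i \<times> normal j
      = (normal i \<bullet> point (j + 1)) *\<^sub>R point j - (normal i \<bullet> point j) *\<^sub>R point (j + 1)"
    unfolding normal_def by (rule cross_cross_cross)
  then have cross: "normal i \<times> normal j = t *\<^sub>R point j"
    using normal_orthogonal_across_gap[OF assms] by (simp add: t_def)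
  have "t \<in> \<int>"
    unfolding t_def by (intro inner_int_vec_in_Ints int_vec_normal int_vec_point)
  moreover have "t \<noteq> 0"
    using det_normal_across_gap_nonzero[OF assms] by (simp add: t_def)
  ultimately have "1 \<le> \<bar>t\<bar>"
    by (rule Ints_nonzero_abs_ge1)
  have "Xseq \<xi> \<eta> j \<le> \<bar>point j $ 1\<bar>"
    using fst_x_eq_Xseq[of j] assms(1,2) by (simp add: point_nth_1)
  also have "\<dots> \<le> norm (point j)"
    by (rule component_le_norm_cart)
  also have "\<dots> \<le> \<bar>t\<bar> * norm (point j)"
    using \<open>1 \<le> \<bar>t\<bar>\<close> by (simp add: mult_le_cancel_right1)
  also have "\<dots> = norm (normal i \<times> normal j)"
    by (simp add: cross)
  also have "\<dots> \<le> norm (normal i) * norm (normal j)"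
    by (rule norm_cross_le)
  also have "\<dots> = Hgt (x i) (x (i + 1)) * Hgt (x j) (x (j + 1))"
    by (simp add: Hgt_def normal_def point_def)
  finally show ?thesis .
qed

lemma linear_form_nonzero:
  assumes "int_vec n" "n \<noteq> 0"
  shows "n $ 1 + n $ 2 * \<xi> + n $ 3 * \<eta> \<noteq> 0"
proof
  assume zero: "n $ 1 + n $ 2 * \<xi> + n $ 3 * \<eta> = 0"
  obtain p q r :: int where pqr: "n $ 1 = of_int p" "n $ 2 = of_int q" "n $ 3 = of_int r"
    using assms(1) unfolding int_vec_def by (metis Ints_cases)
  with zero have "p = 0 \<and> q = 0 \<and> r = 0"
    using indep[rule_format, of "of_int p" "of_int q" "of_int r"] by simp
  with pqr have "n = 0" by (simp add: vec_eq_iff forall_3)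
  with assms(2) show False by contradiction
qed

lemma Xseq_mult_linear_form_le:
  assumes "1 \<le> m" "n \<bullet> point m = 0"
  shows "Xseq \<xi> \<eta> m * \<bar>n $ 1 + n $ 2 * \<xi> + n $ 3 * \<eta>\<bar> \<le> (\<bar>n $ 2\<bar> + \<bar>n $ 3\<bar>) * Delta \<xi> \<eta> 1"
proof -
  obtain a b c where xm: "x m = (a, b, c)" by (cases "x m")
  have a: "real_of_int a = Xseq \<xi> \<eta> m" "1 \<le> Xseq \<xi> \<eta> m"
    using fst_x_eq_Xseq[OF assms(1)] xm Xseq_ge_1[OF infinite_disc_points assms(1)] by simp_all
  have "Delta \<xi> \<eta> (Xseq \<xi> \<eta> m) \<le> Delta \<xi> \<eta> 1"
    using a(2) by (intro Delta_antimono) auto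
  then have approx: "\<bar>of_int a * \<xi> - of_int b\<bar> \<le> Delta \<xi> \<eta> 1"
      "\<bar>of_int a * \<eta> - of_int c\<bar> \<le> Delta \<xi> \<eta> 1"
    using abs_le_delta[where a = a and b = b and c = c and \<xi> = \<xi> and \<eta> = \<eta>]
      delta_x_eq_Delta[OF assms(1)] xm by auto
  from assms(2) have "of_int a * (n $ 1 + n $ 2 * \<xi> + n $ 3 * \<eta>)
      = n $ 2 * (of_int a * \<xi> - of_int b) + n $ 3 * (of_int a * \<eta> - of_int c)"
    unfolding point_def xm by (simp add: to_real3_def inner_vec_def sum_3 vector_3 algebra_simps)
  then have "\<bar>of_int a * (n $ 1 + n $ 2 * \<xi> + n $ 3 * \<eta>)\<bar>
      \<le> \<bar>n $ 2\<bar> * \<bar>of_int a * \<xi> - of_int b\<bar> + \<bar>n $ 3\<bar> * \<bar>of_int a * \<eta> - of_int c\<bar>"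
    by (metis abs_mult abs_triangle_ineq)
  also have "\<dots> \<le> \<bar>n $ 2\<bar> * Delta \<xi> \<eta> 1 + \<bar>n $ 3\<bar> * Delta \<xi> \<eta> 1"
    using approx by (intro add_mono mult_left_mono) auto
  finally show ?thesis
    using a by (simp add: abs_mult abs_of_nonneg distrib_right)
qed

lemma point_not_eventually_orthogonal:
  assumes "int_vec n" "n \<noteq> 0"
  shows "\<exists>m\<ge>M. n \<bullet> point m \<noteq> 0"
proof (rule ccontr)
  assume "\<not> (\<exists>m\<ge>M. n \<bullet> point m \<noteq> 0)"
  define L where "L = n $ 1 + n $ 2 * \<xi> + n $ 3 * \<eta>"
  define C where "C = (\<bar>n $ 2\<bar> + \<bar>n $ 3\<bar>) * Delta \<xi> \<eta> 1"
  define m where "m = M + nat \<lceil>C / \<bar>L\<bar>\<rceil> + 2"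
  have "1 \<le> m" "M \<le> m"
    unfolding m_def by auto
  with \<open>\<not> (\<exists>m\<ge>M. n \<bullet> point m \<noteq> 0)\<close> have "Xseq \<xi> \<eta> m * \<bar>L\<bar> \<le> C"
    unfolding L_def C_def by (intro Xseq_mult_linear_form_le) auto
  moreover have "C / \<bar>L\<bar> < Xseq \<xi> \<eta> m"
    using Xseq_ge_index[OF infinite_disc_points \<open>1 \<le> m\<close>] real_nat_ceiling_ge[of "C / \<bar>L\<bar>"]
    unfolding m_def by simp
  moreover have "L \<noteq> 0"
    unfolding L_def using assms by (rule linear_form_nonzero)
  ultimately show False
    by (simp add: field_simps)
qed

lemma infinite_independent_at: "infinite {i. 2 \<le> i \<and> independent_at i}"
proof
  assume fin: "finite {i. 2 \<le> i \<and> independent_at i}"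
  define M where "M = Max (insert 2 {i. 2 \<le> i \<and> independent_at i})"
  have "2 \<le> M"
    unfolding M_def using fin by simp
  have le_M: "k \<le> M" if "2 \<le> k" "independent_at k" for k
    unfolding M_def using fin that by simp
  have gap: "\<forall>k. M < k \<and> k < j \<longrightarrow> \<not> independent_at k" for j
  proof (intro allI impI notI)
    fix k assume "M < k \<and> k < j" "independent_at k"
    with \<open>2 \<le> M\<close> le_M[of k] show False by linarith
  qed
  have "normal M \<bullet> point m = 0" if "M + 1 \<le> m" for m
  proof -
    have "M \<le> m - 1" "m - 1 < m" using that by auto
    then obtain r where "r \<noteq> 0" "normal (m - 1) = r *\<^sub>R normal M"
      using normal_parallel_across_gap[of M] \<open>2 \<le> M\<close> gap by (metis one_le_numeral order_trans)
    moreover have "normal (m - 1) \<bullet> point m = 0"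
      using normal_orthogonal_next[of "m - 1"] that by simp
    ultimately show ?thesis by simp
  qed
  moreover have "normal M \<noteq> 0"
    using normal_nonzero \<open>2 \<le> M\<close> by simp
  ultimately show False
    using point_not_eventually_orthogonal[OF int_vec_normal, of M "M + 1"] by blast
qed

end

theorem lemma3p2:
  fixes \<xi> \<eta> :: real and f :: "rat poly poly" and x :: "nat \<Rightarrow> int \<times> int \<times> int"
  assumes indep: "\<forall>a b c :: rat. of_rat a + of_rat b * \<xi> + of_rat c * \<eta> = 0
                     \<longrightarrow> a = 0 \<and> b = 0 \<and> c = 0"
    and irr: "irreducible f" and deg: "total_degree f = 2"
    and notQx: "f \<notin> range (\<lambda>p. [:p:])"
    and root: "eval2 f \<xi> \<eta> = 0"
    and approx: "\<exists>lam::real. lam > 1/2 \<and> (\<forall>\<^sub>F X in at_top. X \<ge> 1 \<longrightarrow>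
        (\<exists>x0 x1 x2 :: int. (x0, x1, x2) \<noteq> (0, 0, 0) \<and> \<bar>real_of_int x0\<bar> \<le> X \<and>
           \<bar>real_of_int x0 * \<xi> - real_of_int x1\<bar> \<le> X powr (-lam) \<and>
           \<bar>real_of_int x0 * \<eta> - real_of_int x2\<bar> \<le> X powr (-lam)))"
    and mp: "minimal_points \<xi> \<eta> x"
  defines "I \<equiv> {i. i \<ge> 2 \<and> qlin_indep3 (x (i - 1)) (x i) (x (i + 1))}"
  shows "infinite I \<and>
    (\<forall>i j. i \<in> I \<longrightarrow> j \<in> I \<longrightarrow> i < j \<longrightarrow> (\<forall>k\<in>I. \<not> (i < k \<and> k < j)) \<longrightarrow>
       qspan2 (x i) (x (i + 1)) \<noteq> qspan2 (x j) (x (j + 1)) \<and>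
       Xseq \<xi> \<eta> j \<le> Hgt (x i) (x (i + 1)) * Hgt (x j) (x (j + 1)))"
proof -
  have "\<xi> \<notin> \<rat>"
    using indep by (rule not_Rats_if_rat_independent)
  have "infinite (disc_points \<xi> \<eta>)"
  proof (rule infinite_disc_points)
    show "0 < Delta \<xi> \<eta> X" if "1 \<le> X" for X
      using \<open>\<xi> \<notin> \<rat>\<close> that by (rule Delta_pos)
    show "\<exists>X\<ge>1. Delta \<xi> \<eta> X < e" if "0 < e" for e
      using approx
      by (elim exE conjE) (erule Delta_arbitrarily_small[OF _ _ that, rotated]; linarith)
  qed
  then interpret minimal_point_sequence \<xi> \<eta> x
    using indep mp by unfold_locales
  have "infinite I"
    unfolding I_def by (rule infinite_independent_at)
  moreover have "qspan2 (x i) (x (i + 1)) \<noteq> qspan2 (x j) (x (j + 1)) \<and>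
      Xseq \<xi> \<eta> j \<le> Hgt (x i) (x (i + 1)) * Hgt (x j) (x (j + 1))"
    if "i \<in> I" "j \<in> I" "i < j" "\<forall>k\<in>I. \<not> (i < k \<and> k < j)" for i j
  proof -
    have "1 \<le> i" "independent_at j" "\<forall>k. i < k \<and> k < j \<longrightarrow> \<not> independent_at k"
      using that unfolding I_def by auto
    with \<open>i < j\<close> show ?thesis
      using qspan2_ne_across_gap Xseq_le_Hgt_mult_across_gap by blast
  qed
  ultimately show ?thesis by blast
qed

end
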